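(* Regard spinors as vectors in the 4-dimensional Euclidean space $(\mathrm{Cl}^+(3),(\cdot,\cdot))$ and let $I=e_1e_2e_3$. Then: (i) $\{a_1a_1=1,\ a_1a_2,\ a_1I,\ a_2I\}$ is a set of simple roots of a root system of type $A_2\oplus A_2$ contained in the $H_4$ root system $2I$; (ii) $\{a_1a_1=1,\ a_2a_3,\ a_2I,\ a_3I\}$ is a set of simple roots of a root system of type $H_2\oplus H_2$ contained in $2I$; (iii) $\{a_1a_1,\ a_1a_2,\ a_1a_3a_2a_1a_3a_2a_1a_3,\ a_3a_2a_1a_3a_2a_1a_3a_2a_3a_1a_2a_3\}$ is a set of simple roots of a root system of type $A_4$ contained in $2I$. (A set of simple roots of a given type means its Cartan matrix $A_{ij}=2(\beta_i,\beta_j)/(\beta_i,\beta_i)$ is that of the given type and the root system generated from it by the reflections $s_R(X)=-R\tilde XR$ lies in $2I$.)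
   Context: $\mathrm{Cl}(3)$ is the real Clifford algebra of Euclidean $\mathbb{R}^3$ with orthonormal basis $e_1,e_2,e_3$ ($e_i^2=1$, $e_ie_j=-e_je_i$ for $i\neq j$); all products are geometric products. The even subalgebra $\mathrm{Cl}^+(3)$ is spanned by $1,e_2e_3,e_3e_1,e_1e_2$ (spinors). Reversal $\tilde{\ }$ reverses the order of vector factors. The spinor inner product $(R_1,R_2)=\tfrac12(R_1\tilde R_2+R_2\tilde R_1)$ makes $\mathrm{Cl}^+(3)$ a 4D Euclidean space with orthonormal basis $1,e_2e_3,e_3e_1,e_1e_2$; for unit $R$, $s_R(X)=X-2(R,X)R=-R\tilde XR$. Let $\tau=\frac{1+\sqrt5}{2}$. The $H_3$ simple roots are $a_1=e_2$, $a_2=\tfrac12(-\tau e_1-e_2-(\tau-1)e_3)$, $a_3=e_1$. The binary icosahedral group $2I$ is the set of all products of an even number of factors from $\{a_1,a_2,a_3\}$ (order 120); as 120 vectors in the 4D spinor space it is the $H_4$ root system. Cartan matrices: $A_2\oplus A_2$ is block diagonal with two blocks $\begin{pmatrix}2&-1\\-1&2\end{pmatrix}$; $H_2\oplus H_2$ is block diagonal with two blocks $\begin{pmatrix}2&-\tau\\-\tau&2\end{pmatrix}$; $A_4$ is the $4\times4$ tridiagonal matrix with $2$ on the diagonal and $-1$ on the off-diagonals (up to ordering of simple roots). *)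

theory Defs
  imports Complex_Main "HOL-Combinatorics.Permutations"
begin

text \<open>Multivectors of Cl(3): coefficient functions on blades, a blade being a subset
  of {1,2,3} (the blade e_A is the product of the e_i, i in A, in increasing order).
  Coefficients of sets not contained in {1,2,3} are irrelevant and kept at 0.\<close>

type_synonym mv = "nat set \<Rightarrow> real"

definition blades :: "nat set set" where
  "blades = Pow {1,2,3}"

text \<open>Sign of e_A e_B = sign * e_(A symdiff B), using e_i^2 = 1 and anticommutation.\<close>
definition bsign :: "nat set \<Rightarrow> nat set \<Rightarrow> real" where
  "bsign A B = (-1) ^ card {(i,j). i \<in> A \<and> j \<in> B \<and> j < i}"

definition symd :: "nat set \<Rightarrow> nat set \<Rightarrow> nat set" where
  "symd A B = (A - B) \<union> (B - A)"

definition gp :: "mv \<Rightarrow> mv \<Rightarrow> mv" (infixl "\<odot>" 70) where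
  "gp x y = (\<lambda>C. if C \<in> blades
     then (\<Sum>A\<in>blades. bsign A (symd A C) * x A * y (symd A C)) else 0)"

definition mv_scalar :: "real \<Rightarrow> mv" where
  "mv_scalar c = (\<lambda>A. if A = {} then c else 0)"

definition mv_one :: mv where "mv_one = mv_scalar 1"

definition mv_add :: "mv \<Rightarrow> mv \<Rightarrow> mv" where
  "mv_add x y = (\<lambda>A. x A + y A)"

definition mv_smult :: "real \<Rightarrow> mv \<Rightarrow> mv" where
  "mv_smult c x = (\<lambda>A. c * x A)"

definition mv_neg :: "mv \<Rightarrow> mv" where
  "mv_neg x = (\<lambda>A. - x A)"

definition ev :: "nat \<Rightarrow> mv" where
  "ev i = (\<lambda>A. if A = {i} then 1 else 0)"

definition mv_rev :: "mv \<Rightarrow> mv" where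
  "mv_rev x = (\<lambda>A. (-1) ^ (card A * (card A - 1) div 2) * x A)"

definition spinors :: "mv set" where
  "spinors = {x. \<forall>A. (A \<notin> blades \<or> odd (card A)) \<longrightarrow> x A = 0}"

text \<open>Spinor inner product (R1,R2) = 1/2 (R1 ~R2 + R2 ~R1); for spinors this is a
  scalar, and we take its scalar (empty-blade) coefficient as a real number.\<close>
definition sinner :: "mv \<Rightarrow> mv \<Rightarrow> real" where
  "sinner R1 R2 = (1/2) * ((R1 \<odot> mv_rev R2) {} + (R2 \<odot> mv_rev R1) {})"

definition srefl :: "mv \<Rightarrow> mv \<Rightarrow> mv" where
  "srefl R X = mv_neg ((R \<odot> mv_rev X) \<odot> R)"

definition tau :: real where "tau = (1 + sqrt 5) / 2"

text \<open>H3 simple roots a_1, a_2, a_3.\<close>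
definition aroot :: "nat \<Rightarrow> mv" where
  "aroot k = (if k = 1 then ev 2
     else if k = 2 then mv_smult (1/2)
            (mv_add (mv_add (mv_smult (- tau) (ev 1)) (mv_neg (ev 2)))
                    (mv_smult (- (tau - 1)) (ev 3)))
     else ev 1)"

definition aword :: "nat list \<Rightarrow> mv" where
  "aword ws = foldr (\<lambda>k acc. aroot k \<odot> acc) ws mv_one"

definition pseudoI :: mv where "pseudoI = (ev 1 \<odot> ev 2) \<odot> ev 3"

text \<open>Binary icosahedral group 2I: all products of an even number of factors from
  {a_1,a_2,a_3} (the empty product 1 included).\<close>
definition binicos :: "mv set" where
  "binicos = {aword ws | ws. even (length ws) \<and> set ws \<subseteq> {1,2,3}}"

inductive_set gen_roots :: "mv set \<Rightarrow> mv set" for S :: "mv set" where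
  base: "X \<in> S \<Longrightarrow> X \<in> gen_roots S"
| refl: "R \<in> gen_roots S \<Longrightarrow> X \<in> gen_roots S \<Longrightarrow> srefl R X \<in> gen_roots S"

definition cartan :: "(nat \<Rightarrow> mv) \<Rightarrow> nat \<Rightarrow> nat \<Rightarrow> real" where
  "cartan \<beta> i j = 2 * sinner (\<beta> i) (\<beta> j) / sinner (\<beta> i) (\<beta> i)"

definition cartan_A2A2 :: "nat \<Rightarrow> nat \<Rightarrow> real" where
  "cartan_A2A2 i j =
     (if i = j then 2 else if {i,j} = {0,1} \<or> {i,j} = {2,3} then -1 else 0)"

definition cartan_H2H2 :: "nat \<Rightarrow> nat \<Rightarrow> real" where
  "cartan_H2H2 i j =
     (if i = j then 2 else if {i,j} = {0,1} \<or> {i,j} = {2,3} then - tau else 0)"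

definition cartan_A4 :: "nat \<Rightarrow> nat \<Rightarrow> real" where
  "cartan_A4 i j = (if i = j then 2 else if i = j + 1 \<or> j = i + 1 then -1 else 0)"

definition simple_roots_of_type_in_2I :: "(nat \<Rightarrow> mv) \<Rightarrow> (nat \<Rightarrow> nat \<Rightarrow> real) \<Rightarrow> bool" where
  "simple_roots_of_type_in_2I \<beta> M \<longleftrightarrow>
     (\<forall>i<4. \<beta> i \<in> spinors) \<and>
     (\<exists>p. p permutes {0..<4} \<and> (\<forall>i<4. \<forall>j<4. cartan \<beta> (p i) (p j) = M i j)) \<and>
     gen_roots (\<beta> ` {0..<4}) \<subseteq> binicos"

end

theory Submission
  imports Defs
begin

(* In the blade coordinates of Cl(3) the geometric product, the reversal and the spinor inner
   product (which is just the Euclidean inner product of coordinates) are explicit polynomial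
   formulas, so with tau^2 = tau + 1 the Cartan matrices are a finite computation.
   For the containment in 2I: since -1 = a1 a3 a1 a3 and reversal reverses words in the unit
   vectors a_k, the reflection s_R(X) = - R ~X R of two even words is again an even word.  Thus 2I
   is closed under reflection in its own elements, and it suffices that the simple roots lie in
   2I.  For a_k I this holds because I = (a3 a2 a1)^5 is an odd word: the Coxeter element
   s3 s2 s1 of H3 raised to half the Coxeter number 10 is the longest element, which acts as -1
   on R^3, so its versor is +-I. *)

(* keeps the blade {1} from being rewritten to {Suc 0} *)
declare One_nat_def [simp del]

lemma tau_sq: "tau * tau = tau + 1"
  unfolding tau_def by (simp add: field_simps)

lemma tau_mult_tau_mult: "tau * (tau * x) = tau * x + x"
  by (metis tau_sq distrib_right mult.assoc mult_1)

lemma blades_eq: "blades = {{},{1},{2},{3},{1,2},{1,3},{2,3},{1,2,3}}"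
  unfolding blades_def by (simp add: Pow_insert insert_commute)

lemma in_blades:
  "{} \<in> blades" "{1} \<in> blades" "{2} \<in> blades" "{3} \<in> blades"
  "{1,2} \<in> blades" "{1,3} \<in> blades" "{2,3} \<in> blades" "{1,2,3} \<in> blades"
  by (simp_all add: blades_eq)

lemma sum_blades:
  "sum f blades = f {} + f {1} + f {2} + f {3} + f {1,2} + f {1,3} + f {2,3} + f {1,2,3}"
  by (simp add: blades_eq doubleton_eq_iff insert_eq_iff add.assoc)

lemma bsign_eq:
  assumes "finite A" "finite B"
  shows "bsign A B = (-1) ^ (\<Sum>i\<in>A. card (B \<inter> {..<i}))"
proof -
  have "{(i,j). i \<in> A \<and> j \<in> B \<and> j < i} = Sigma A (\<lambda>i. B \<inter> {..<i})" by auto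
  then show ?thesis unfolding bsign_def using assms by simp
qed

definition mvec ::
    "real \<Rightarrow> real \<Rightarrow> real \<Rightarrow> real \<Rightarrow> real \<Rightarrow> real \<Rightarrow> real \<Rightarrow> real \<Rightarrow> mv" where
  "mvec a0 a1 a2 a3 a12 a13 a23 a123 = (\<lambda>A.
     if A = {} then a0 else if A = {1} then a1 else if A = {2} then a2 else if A = {3} then a3
     else if A = {1,2} then a12 else if A = {1,3} then a13 else if A = {2,3} then a23
     else if A = {1,2,3} then a123 else 0)"

lemma mvec_apply [simp]:
  "mvec a0 a1 a2 a3 a12 a13 a23 a123 {} = a0"
  "mvec a0 a1 a2 a3 a12 a13 a23 a123 {1} = a1"
  "mvec a0 a1 a2 a3 a12 a13 a23 a123 {2} = a2"
  "mvec a0 a1 a2 a3 a12 a13 a23 a123 {3} = a3"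
  "mvec a0 a1 a2 a3 a12 a13 a23 a123 {1,2} = a12"
  "mvec a0 a1 a2 a3 a12 a13 a23 a123 {1,3} = a13"
  "mvec a0 a1 a2 a3 a12 a13 a23 a123 {2,3} = a23"
  "mvec a0 a1 a2 a3 a12 a13 a23 a123 {1,2,3} = a123"
  by (simp_all add: mvec_def doubleton_eq_iff insert_eq_iff)

lemma mvec_outside_blades: "C \<notin> blades \<Longrightarrow> mvec a0 a1 a2 a3 a12 a13 a23 a123 C = 0"
  by (auto simp: mvec_def blades_eq)

lemma gp_eq_mvec:
  "x \<odot> y = mvec
     (x {} * y {} + x {1} * y {1} + x {2} * y {2} + x {3} * y {3}
      - x {1,2} * y {1,2} - x {1,3} * y {1,3} - x {2,3} * y {2,3} - x {1,2,3} * y {1,2,3})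
     (x {} * y {1} + x {1} * y {} - x {2} * y {1,2} - x {3} * y {1,3}
      + x {1,2} * y {2} + x {1,3} * y {3} - x {2,3} * y {1,2,3} - x {1,2,3} * y {2,3})
     (x {} * y {2} + x {1} * y {1,2} + x {2} * y {} - x {3} * y {2,3}
      - x {1,2} * y {1} + x {1,3} * y {1,2,3} + x {2,3} * y {3} + x {1,2,3} * y {1,3})
     (x {} * y {3} + x {1} * y {1,3} + x {2} * y {2,3} + x {3} * y {}
      - x {1,2} * y {1,2,3} - x {1,3} * y {1} - x {2,3} * y {2} - x {1,2,3} * y {1,2})
     (x {} * y {1,2} + x {1} * y {2} - x {2} * y {1} + x {3} * y {1,2,3}
      + x {1,2} * y {} - x {1,3} * y {2,3} + x {2,3} * y {1,3} + x {1,2,3} * y {3})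
     (x {} * y {1,3} + x {1} * y {3} - x {2} * y {1,2,3} - x {3} * y {1}
      + x {1,2} * y {2,3} + x {1,3} * y {} - x {2,3} * y {1,2} - x {1,2,3} * y {2})
     (x {} * y {2,3} + x {1} * y {1,2,3} + x {2} * y {3} - x {3} * y {2}
      - x {1,2} * y {1,3} + x {1,3} * y {1,2} + x {2,3} * y {} + x {1,2,3} * y {1})
     (x {} * y {1,2,3} + x {1} * y {2,3} - x {2} * y {1,3} + x {3} * y {1,2}
      + x {1,2} * y {3} - x {1,3} * y {2} + x {2,3} * y {1} + x {1,2,3} * y {})"
  (is "_ = ?rhs")
proof
  fix C
  consider "C \<notin> blades" | "C = {}" | "C = {1}" | "C = {2}" | "C = {3}"
    | "C = {1,2}" | "C = {1,3}" | "C = {2,3}" | "C = {1,2,3}"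
    unfolding blades_eq by blast
  then show "(x \<odot> y) C = ?rhs C"
    by cases (simp_all add: gp_def in_blades mvec_outside_blades sum_blades bsign_eq symd_def
        insert_Diff_if Int_insert_left insert_commute)
qed

lemma mvec_eq_iff:
  "mvec a0 a1 a2 a3 a12 a13 a23 a123 = mvec b0 b1 b2 b3 b12 b13 b23 b123 \<longleftrightarrow>
   a0 = b0 \<and> a1 = b1 \<and> a2 = b2 \<and> a3 = b3 \<and> a12 = b12 \<and> a13 = b13 \<and> a23 = b23 \<and> a123 = b123"
  by (metis mvec_apply)

lemma gp_mvec:
  "mvec a0 a1 a2 a3 a4 a5 a6 a7 \<odot> mvec b0 b1 b2 b3 b4 b5 b6 b7 =
   mvec (a0*b0 + a1*b1 + a2*b2 + a3*b3 - a4*b4 - a5*b5 - a6*b6 - a7*b7)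
        (a0*b1 + a1*b0 - a2*b4 - a3*b5 + a4*b2 + a5*b3 - a6*b7 - a7*b6)
        (a0*b2 + a1*b4 + a2*b0 - a3*b6 - a4*b1 + a5*b7 + a6*b3 + a7*b5)
        (a0*b3 + a1*b5 + a2*b6 + a3*b0 - a4*b7 - a5*b1 - a6*b2 - a7*b4)
        (a0*b4 + a1*b2 - a2*b1 + a3*b7 + a4*b0 - a5*b6 + a6*b5 + a7*b3)
        (a0*b5 + a1*b3 - a2*b7 - a3*b1 + a4*b6 + a5*b0 - a6*b4 - a7*b2)
        (a0*b6 + a1*b7 + a2*b3 - a3*b2 - a4*b5 + a5*b4 + a6*b0 + a7*b1)
        (a0*b7 + a1*b6 - a2*b5 + a3*b4 + a4*b3 - a5*b2 + a6*b1 + a7*b0)"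
  by (simp add: gp_eq_mvec)

lemma gp_assoc: "(x \<odot> y) \<odot> z = x \<odot> (y \<odot> z)"
  by (simp add: gp_eq_mvec mvec_eq_iff algebra_simps)

definition on_blades :: "mv \<Rightarrow> bool" where
  "on_blades x \<longleftrightarrow> (\<forall>A. A \<notin> blades \<longrightarrow> x A = 0)"

lemma on_blades_mvec [simp]: "on_blades (mvec a0 a1 a2 a3 a12 a13 a23 a123)"
  by (simp add: on_blades_def mvec_outside_blades)

lemma on_blades_gp [simp]: "on_blades (x \<odot> y)"
  by (simp add: on_blades_def gp_def)

lemma mvec_coords:
  assumes "on_blades x"
  shows "mvec (x {}) (x {1}) (x {2}) (x {3}) (x {1,2}) (x {1,3}) (x {2,3}) (x {1,2,3}) = x"
proof
  fix C
  consider "C \<notin> blades" | "C = {}" | "C = {1}" | "C = {2}" | "C = {3}"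
    | "C = {1,2}" | "C = {1,3}" | "C = {2,3}" | "C = {1,2,3}"
    unfolding blades_eq by blast
  then show "mvec (x {}) (x {1}) (x {2}) (x {3}) (x {1,2}) (x {1,3}) (x {2,3}) (x {1,2,3}) C = x C"
    by cases (use assms in \<open>simp_all add: on_blades_def mvec_outside_blades\<close>)
qed

lemma mv_one_mvec: "mv_one = mvec 1 0 0 0 0 0 0 0"
  by (auto simp: mv_one_def mv_scalar_def mvec_def)

lemma mv_one_gp: "on_blades x \<Longrightarrow> mv_one \<odot> x = x"
  by (simp add: mv_one_mvec gp_eq_mvec mvec_coords)

lemma gp_mv_one: "on_blades x \<Longrightarrow> x \<odot> mv_one = x"
  by (simp add: mv_one_mvec gp_eq_mvec mvec_coords)

lemma mv_rev_apply [simp]: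
  "mv_rev x {} = x {}" "mv_rev x {1} = x {1}" "mv_rev x {2} = x {2}" "mv_rev x {3} = x {3}"
  "mv_rev x {1,2} = - x {1,2}" "mv_rev x {1,3} = - x {1,3}" "mv_rev x {2,3} = - x {2,3}"
  "mv_rev x {1,2,3} = - x {1,2,3}"
  by (simp_all add: mv_rev_def)

lemma mv_rev_mvec:
  "mv_rev (mvec a0 a1 a2 a3 a12 a13 a23 a123) = mvec a0 a1 a2 a3 (- a12) (- a13) (- a23) (- a123)"
  by (rule ext) (simp add: mv_rev_def mvec_def)

lemma mv_neg_mvec:
  "mv_neg (mvec a0 a1 a2 a3 a12 a13 a23 a123) =
   mvec (- a0) (- a1) (- a2) (- a3) (- a12) (- a13) (- a23) (- a123)"
  by (rule ext) (simp add: mv_neg_def mvec_def)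

lemma mv_rev_gp: "mv_rev (x \<odot> y) = mv_rev y \<odot> mv_rev x"
  by (simp add: gp_eq_mvec mv_rev_mvec mvec_eq_iff algebra_simps)

lemma sinner_eq:
  "sinner x y = x {} * y {} + x {1} * y {1} + x {2} * y {2} + x {3} * y {3}
     + x {1,2} * y {1,2} + x {1,3} * y {1,3} + x {2,3} * y {2,3} + x {1,2,3} * y {1,2,3}"
  by (simp add: sinner_def gp_eq_mvec algebra_simps)

lemma mvec_in_spinors: "mvec a0 0 0 0 a12 a13 a23 0 \<in> spinors"
  unfolding spinors_def
proof (intro CollectI allI impI)
  fix A
  assume "A \<notin> blades \<or> odd (card A)"
  then show "mvec a0 0 0 0 a12 a13 a23 0 A = 0"
    by (cases "A \<in> blades") (auto simp: blades_eq mvec_outside_blades)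
qed

lemma ev_mvec:
  "ev 1 = mvec 0 1 0 0 0 0 0 0" "ev 2 = mvec 0 0 1 0 0 0 0 0" "ev 3 = mvec 0 0 0 1 0 0 0 0"
  by (auto simp: ev_def mvec_def)

lemma aroot_mvec:
  "aroot 1 = mvec 0 0 1 0 0 0 0 0"
  "aroot 2 = mvec 0 (- tau / 2) (- 1 / 2) ((1 - tau) / 2) 0 0 0 0"
  "aroot 3 = mvec 0 1 0 0 0 0 0 0"
  by (auto simp: aroot_def ev_mvec mv_smult_def mv_add_def mv_neg_def mvec_def)

lemma aroot_cases: "aroot k \<in> {aroot 1, aroot 2, aroot 3}"
  by (simp add: aroot_def)

lemma on_blades_aroot [simp]: "on_blades (aroot k)"
  using aroot_cases[of k] by (auto simp: aroot_mvec)

lemma mv_rev_aroot [simp]: "mv_rev (aroot k) = aroot k"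
  using aroot_cases[of k] by (auto simp: aroot_mvec mv_rev_mvec)

lemma pseudoI_mvec: "pseudoI = mvec 0 0 0 0 0 0 0 1"
  by (simp add: pseudoI_def ev_mvec gp_mvec)

lemma aword_Nil: "aword [] = mv_one"
  by (simp add: aword_def)

lemma aword_Cons: "aword (k # ws) = aroot k \<odot> aword ws"
  by (simp add: aword_def)

lemma on_blades_aword [simp]: "on_blades (aword ws)"
  by (cases ws) (simp_all add: aword_Nil aword_Cons mv_one_mvec)

lemma aword_append: "aword (xs @ ys) = aword xs \<odot> aword ys"
  by (induction xs) (simp_all add: aword_Nil aword_Cons mv_one_gp gp_assoc)

lemma mv_rev_aword: "mv_rev (aword ws) = aword (rev ws)"
proof (induction ws)
  case Nil
  then show ?case by (simp add: aword_Nil mv_one_mvec mv_rev_mvec)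
next
  case (Cons k ws)
  then show ?case by (simp add: aword_Cons aword_Nil mv_rev_gp aword_append gp_mv_one)
qed

lemmas aword_eval =
  aword_Cons aword_Nil aroot_mvec mv_one_mvec gp_mvec mvec_eq_iff tau_sq tau_mult_tau_mult

lemma aword_double: "aword [k, k] = mv_one"
  using aroot_cases[of k] by (auto simp: aword_eval algebra_simps) (simp_all add: field_simps)

lemma aword_1313: "aword [1,3,1,3] = mvec (-1) 0 0 0 0 0 0 0"
  by (simp add: aword_eval)

lemma aword_1313_gp:
  assumes "on_blades x"
  shows "aword [1,3,1,3] \<odot> x = mv_neg x"
proof -
  have "aword [1,3,1,3] \<odot> x =
    mv_neg (mvec (x {}) (x {1}) (x {2}) (x {3}) (x {1,2}) (x {1,3}) (x {2,3}) (x {1,2,3}))"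
    by (simp add: aword_1313 gp_eq_mvec mv_neg_mvec)
  then show ?thesis
    by (simp add: mvec_coords assms)
qed

lemma srefl_aword: "srefl (aword r) (aword x) = aword ([1,3,1,3] @ r @ rev x @ r)"
proof -
  have "aword ([1,3,1,3] @ r @ rev x @ r) =
    aword [1,3,1,3] \<odot> (aword r \<odot> (aword (rev x) \<odot> aword r))"
    by (simp only: aword_append)
  then show ?thesis
    by (simp add: srefl_def mv_rev_aword aword_1313_gp gp_assoc)
qed

lemma aword_in_binicos: "even (length ws) \<Longrightarrow> set ws \<subseteq> {1,2,3} \<Longrightarrow> aword ws \<in> binicos"
  unfolding binicos_def by blast

lemma srefl_in_binicos:
  assumes "R \<in> binicos" "X \<in> binicos"
  shows "srefl R X \<in> binicos"
proof -
  obtain r x where "R = aword r" "even (length r)" "set r \<subseteq> {1,2,3}"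
    and "X = aword x" "even (length x)" "set x \<subseteq> {1,2,3}"
    using assms unfolding binicos_def by blast
  then show ?thesis
    by (simp add: srefl_aword aword_in_binicos)
qed

lemma gen_roots_subset:
  assumes "S \<subseteq> T" and "\<And>R X. R \<in> T \<Longrightarrow> X \<in> T \<Longrightarrow> srefl R X \<in> T"
  shows "gen_roots S \<subseteq> T"
proof
  fix X
  assume "X \<in> gen_roots S"
  then show "X \<in> T"
    by induction (use assms in auto)
qed

lemma gen_roots_subset_binicos: "S \<subseteq> binicos \<Longrightarrow> gen_roots S \<subseteq> binicos"
  by (rule gen_roots_subset) (auto intro: srefl_in_binicos)

lemma all_less_four: "(\<forall>i<(4::nat). P i) \<longleftrightarrow> P 0 \<and> P 1 \<and> P 2 \<and> P 3"
  by (auto simp: less_Suc_eq numeral_eq_Suc One_nat_def)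

lemma simple_roots_of_type_in_2I_intro:
  assumes "\<forall>i<4. \<beta> i \<in> spinors"
    and "\<forall>i<4. \<forall>j<4. cartan \<beta> i j = M i j"
    and "\<forall>i<4. \<beta> i \<in> binicos"
  shows "simple_roots_of_type_in_2I \<beta> M"
proof -
  have "gen_roots (\<beta> ` {0..<4}) \<subseteq> binicos"
    using assms(3) by (intro gen_roots_subset_binicos) auto
  then show ?thesis
    unfolding simple_roots_of_type_in_2I_def using assms(1,2)
    by (auto intro!: exI[of _ id] permutes_id)
qed

lemma pseudoI_aword: "pseudoI = aword [3,2,1,3,2,1,3,2,1,3,2,1,3,2,1]"
  by (simp add: pseudoI_mvec aword_eval algebra_simps) (simp add: field_simps)

lemma aroot_pseudoI_in_binicos: "k \<in> {1,2,3} \<Longrightarrow> aroot k \<odot> pseudoI \<in> binicos"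
  unfolding pseudoI_aword aword_Cons[symmetric] by (rule aword_in_binicos) auto

lemma simple_roots_A2A2:
  "simple_roots_of_type_in_2I
     (\<lambda>i. [aword [1,1], aword [1,2], aroot 1 \<odot> pseudoI, aroot 2 \<odot> pseudoI] ! i) cartan_A2A2"
  (is "simple_roots_of_type_in_2I (\<lambda>i. ?roots ! i) _")
proof (rule simple_roots_of_type_in_2I_intro)
  have coords: "?roots =
    [mvec 1 0 0 0 0 0 0 0, mvec (-1/2) 0 0 0 (tau/2) 0 ((1 - tau)/2) 0,
     mvec 0 0 0 0 0 (-1) 0 0, mvec 0 0 0 0 ((1 - tau)/2) (1/2) (-tau/2) 0]"
    by (simp add: aword_eval pseudoI_mvec)
  then show "\<forall>i<4. ?roots ! i \<in> spinors"
    by (simp add: all_less_four mvec_in_spinors)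
  show "\<forall>i<4. \<forall>j<4. cartan (\<lambda>i. ?roots ! i) i j = cartan_A2A2 i j"
    by (simp add: coords all_less_four cartan_def cartan_A2A2_def sinner_eq doubleton_eq_iff
        tau_sq tau_mult_tau_mult field_simps)
  show "\<forall>i<4. ?roots ! i \<in> binicos"
    by (simp add: all_less_four aword_in_binicos aroot_pseudoI_in_binicos)
qed

lemma simple_roots_H2H2:
  "simple_roots_of_type_in_2I
     (\<lambda>i. [aword [1,1], aword [2,3], aroot 2 \<odot> pseudoI, aroot 3 \<odot> pseudoI] ! i) cartan_H2H2"
  (is "simple_roots_of_type_in_2I (\<lambda>i. ?roots ! i) _")
proof (rule simple_roots_of_type_in_2I_intro)
  have coords: "?roots =
    [mvec 1 0 0 0 0 0 0 0, mvec (-tau/2) 0 0 0 (1/2) ((tau - 1)/2) 0 0,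
     mvec 0 0 0 0 ((1 - tau)/2) (1/2) (-tau/2) 0, mvec 0 0 0 0 0 0 1 0]"
    by (simp add: aword_eval pseudoI_mvec algebra_simps) (simp add: field_simps)
  then show "\<forall>i<4. ?roots ! i \<in> spinors"
    by (simp add: all_less_four mvec_in_spinors)
  show "\<forall>i<4. \<forall>j<4. cartan (\<lambda>i. ?roots ! i) i j = cartan_H2H2 i j"
    by (simp add: coords all_less_four cartan_def cartan_H2H2_def sinner_eq doubleton_eq_iff
        tau_sq tau_mult_tau_mult field_simps)
  show "\<forall>i<4. ?roots ! i \<in> binicos"
    by (simp add: all_less_four aword_in_binicos aroot_pseudoI_in_binicos)
qed

lemma simple_roots_A4:
  "simple_roots_of_type_in_2I
     (\<lambda>i. [aword [1,1], aword [1,2], aword [1,3,2,1,3,2,1,3],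
           aword [3,2,1,3,2,1,3,2,3,1,2,3]] ! i) cartan_A4"
  (is "simple_roots_of_type_in_2I (\<lambda>i. ?roots ! i) _")
proof (rule simple_roots_of_type_in_2I_intro)
  have coords: "?roots =
    [mvec 1 0 0 0 0 0 0 0, mvec (-1/2) 0 0 0 (tau/2) 0 ((1 - tau)/2) 0,
     mvec 0 0 0 0 (-tau/2) ((tau - 1)/2) (-1/2) 0, mvec 0 0 0 0 ((tau - 1)/2) (1/2) (tau/2) 0]"
    by (simp add: aword_eval algebra_simps) (simp add: field_simps)
  then show "\<forall>i<4. ?roots ! i \<in> spinors"
    by (simp add: all_less_four mvec_in_spinors)
  show "\<forall>i<4. \<forall>j<4. cartan (\<lambda>i. ?roots ! i) i j = cartan_A4 i j"
    by (simp add: coords all_less_four cartan_def cartan_A4_def sinner_eq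
        tau_sq tau_mult_tau_mult field_simps)
  show "\<forall>i<4. ?roots ! i \<in> binicos"
    by (simp add: all_less_four aword_in_binicos)
qed

theorem mainTheorem5:
  shows "aword [1,1] = mv_one
    \<and> simple_roots_of_type_in_2I
        (\<lambda>i. [aword [1,1], aword [1,2], aroot 1 \<odot> pseudoI, aroot 2 \<odot> pseudoI] ! i) cartan_A2A2
    \<and> simple_roots_of_type_in_2I
        (\<lambda>i. [aword [1,1], aword [2,3], aroot 2 \<odot> pseudoI, aroot 3 \<odot> pseudoI] ! i) cartan_H2H2
    \<and> simple_roots_of_type_in_2I
        (\<lambda>i. [aword [1,1], aword [1,2], aword [1,3,2,1,3,2,1,3],
              aword [3,2,1,3,2,1,3,2,3,1,2,3]] ! i) cartan_A4"
  by (intro conjI aword_double simple_roots_A2A2 simple_roots_H2H2 simple_roots_A4)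

end
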